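(* Let $d\ge2$ and let $g:\mathbb{R}\to\mathbb{R}$ be a locally Lipschitz function. Assume that for every bounded interval $[a,b]$ there is a separately convex function $f_{[a,b]}:\mathbb{R}^d\to\mathbb{R}$ such that $f_{[a,b]}(u,u,\dots,u)=g(u)$ for each $u\in[a,b]$. Then there is a separately convex function $f:\mathbb{R}^d\to\mathbb{R}$ such that $f(u,u,\dots,u)=g(u)$ for each $u\in\mathbb{R}$.
   Context: A function $f:\mathbb{R}^d\to\mathbb{R}$ is called separately convex if it is convex on every line parallel to a coordinate axis. *)

theory Defs
  imports "HOL-Analysis.Analysis"
begin

definition separately_convex :: "(real ^ 'n \<Rightarrow> real) \<Rightarrow> bool" where
  "separately_convex f \<longleftrightarrow>
     (\<forall>x i. convex_on UNIV (\<lambda>t. f (x + t *\<^sub>R axis i 1)))"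

definition locally_lipschitz :: "(real \<Rightarrow> real) \<Rightarrow> bool" where
  "locally_lipschitz g \<longleftrightarrow> (\<forall>a b. \<exists>L. L-lipschitz_on {a..b} g)"

end

theory Submission
  imports Defs
begin

(*
  Fix coordinates i \<noteq> j. The saddle s(a, b) = max a 0 * max b 0 - a * b is affine in each
  variable, vanishes for a, b \<ge> 0, equals -a^2 on the diagonal for a < 0, and is at most
  -1/4 for a, b \<le> -1/2; evaluated at shifted or reflected copies of (x_i, x_j) it is
  separately convex. Given G matching g on the diagonal over [-R, R] and H matching g over
  [-(R+1), R+1], the maximum of G and H, each plus a large multiple of such saddles, is
  separately convex, matches g over [-(R+1), R+1], and equals G on the ball of radius R - 1.
  The multiple only has to beat the bounds of G and H on a cube, and separately convex
  functions are bounded on boxes. Iterating gives a sequence that stabilises on every ball;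
  its pointwise limit is the required function.
*)

lemma convex_on_max:
  assumes "convex_on S f" and "convex_on S g"
  shows "convex_on S (\<lambda>x. max (f x) (g x))"
proof (rule convex_onI)
  fix t :: real and x y assume t: "0 < t" "t < 1" and xy: "x \<in> S" "y \<in> S"
  have "f ((1 - t) *\<^sub>R x + t *\<^sub>R y) \<le> (1 - t) * f x + t * f y"
       "g ((1 - t) *\<^sub>R x + t *\<^sub>R y) \<le> (1 - t) * g x + t * g y"
    using assms t xy by (auto intro: convex_onD)
  moreover have "(1 - t) * f x + t * f y \<le> (1 - t) * max (f x) (g x) + t * max (f y) (g y)"
                "(1 - t) * g x + t * g y \<le> (1 - t) * max (f x) (g x) + t * max (f y) (g y)"
    using t by (auto intro!: add_mono mult_left_mono)
  ultimately show "max (f ((1 - t) *\<^sub>R x + t *\<^sub>R y)) (g ((1 - t) *\<^sub>R x + t *\<^sub>R y))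
      \<le> (1 - t) * max (f x) (g x) + t * max (f y) (g y)"
    by linarith
qed (use assms convex_on_imp_convex in blast)

lemma convex_on_affine_real: "convex_on UNIV (\<lambda>x::real. s * x + t)"
  by (rule convex_onI) (auto simp: algebra_simps)

definition saddle :: "real \<Rightarrow> real \<Rightarrow> real" where
  "saddle a b = max a 0 * max b 0 - a * b"

lemma saddle_commute: "saddle a b = saddle b a"
  by (simp add: saddle_def mult.commute)

lemma saddle_eq_0: "0 \<le> a \<Longrightarrow> 0 \<le> b \<Longrightarrow> saddle a b = 0"
  by (simp add: saddle_def)

lemma saddle_self_le_0: "saddle a a \<le> 0"
  by (simp add: saddle_def max_def)

lemma saddle_le_neg_quarter:
  assumes "a \<le> -1/2" and "b \<le> -1/2"
  shows "saddle a b \<le> -1/4"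
proof -
  have "1/2 * (1/2) \<le> (-a) * (-b)"
    using assms by (intro mult_mono) auto
  then show ?thesis
    using assms by (simp add: saddle_def)
qed

lemma convex_on_saddle_affine: "convex_on UNIV (\<lambda>x. saddle (s * x + t) b)"
proof -
  have "convex_on UNIV (\<lambda>x. max (s * x + t) 0)"
    by (intro convex_on_max convex_on_affine_real) (simp add: convex_on_const)
  then have "convex_on UNIV (\<lambda>x. max b 0 * max (s * x + t) 0 + ((- b * s) * x + (- b * t)))"
    by (intro convex_on_add convex_on_cmul convex_on_affine_real) auto
  then show ?thesis
    by (simp add: saddle_def algebra_simps)
qed

lemma separately_convex_add:
  "separately_convex f \<Longrightarrow> separately_convex g \<Longrightarrow> separately_convex (\<lambda>x. f x + g x)"
  unfolding separately_convex_def by (auto intro: convex_on_add)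

lemma separately_convex_cmul:
  "0 \<le> c \<Longrightarrow> separately_convex f \<Longrightarrow> separately_convex (\<lambda>x. c * f x)"
  unfolding separately_convex_def by (auto intro: convex_on_cmul)

lemma separately_convex_max:
  "separately_convex f \<Longrightarrow> separately_convex g \<Longrightarrow> separately_convex (\<lambda>x. max (f x) (g x))"
  unfolding separately_convex_def by (auto intro: convex_on_max)

lemma axis_line_component:
  "(x + t *\<^sub>R axis k 1) $ i = x $ i + (if i = k then t else (0::real))"
  by (simp add: axis_def)

lemma separately_convex_saddle:
  fixes i j :: "'n::finite"
  assumes "i \<noteq> j"
  shows "separately_convex (\<lambda>x::real^'n. saddle (s * x $ i + t) (s * x $ j + t))"
  unfolding separately_convex_def
proof (intro allI)
  fix x :: "real^'n" and k
  have "convex_on UNIV (\<lambda>r. saddle (s * r + (s * x $ i + t)) (s * x $ j + t))"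
       "convex_on UNIV (\<lambda>r. saddle (s * r + (s * x $ j + t)) (s * x $ i + t))"
    by (rule convex_on_saddle_affine)+
  then show "convex_on UNIV (\<lambda>r. saddle (s * (x + r *\<^sub>R axis k 1) $ i + t) (s * (x + r *\<^sub>R axis k 1) $ j + t))"
    unfolding axis_line_component using assms
    by (cases "k = i"; cases "k = j")
       (simp_all add: algebra_simps saddle_commute convex_on_const)
qed

lemma separately_convex_bounded_on_slice:
  fixes f :: "real^'n \<Rightarrow> real"
  assumes sc: "separately_convex f" and "finite S"
  shows "\<exists>B. \<forall>y\<in>cbox a b. (\<forall>i. i \<notin> S \<longrightarrow> y $ i = x $ i) \<longrightarrow> \<bar>f y\<bar> \<le> B"
  using \<open>finite S\<close>
proof (induction arbitrary: x)
  case empty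
  have "y = x" if "\<forall>i. y $ i = x $ i" for y :: "real^'n"
    using that by (simp add: vec_eq_iff)
  then show ?case by auto
next
  case (insert j S)
  let ?e = "axis j (1::real)"
  let ?slice = "\<lambda>t y. y \<in> cbox a b \<and> (\<forall>i. i \<notin> S \<longrightarrow> y $ i = (x + (t - x $ j) *\<^sub>R ?e) $ i)"
  define c where "c = (a $ j + b $ j) / 2"
  obtain Ba Bb Bc where
    Ba: "\<And>y. ?slice (a $ j) y \<Longrightarrow> \<bar>f y\<bar> \<le> Ba" and Bb: "\<And>y. ?slice (b $ j) y \<Longrightarrow> \<bar>f y\<bar> \<le> Bb" and
    Bc: "\<And>y. ?slice c y \<Longrightarrow> \<bar>f y\<bar> \<le> Bc"
    using insert.IH[of "x + (a $ j - x $ j) *\<^sub>R ?e"] insert.IH[of "x + (b $ j - x $ j) *\<^sub>R ?e"]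
      insert.IH[of "x + (c - x $ j) *\<^sub>R ?e"] by blast
  have slice_line: "?slice t (y + (t - y $ j) *\<^sub>R ?e)"
    if "y \<in> cbox a b" "\<forall>i. i \<notin> insert j S \<longrightarrow> y $ i = x $ i" "a $ j \<le> t" "t \<le> b $ j" for y t
    using that unfolding mem_box_cart axis_line_component by auto
  have bounds: "\<bar>f (y + (a $ j - y $ j) *\<^sub>R ?e)\<bar> \<le> Ba" "\<bar>f (y + (b $ j - y $ j) *\<^sub>R ?e)\<bar> \<le> Bb"
    "\<bar>f (y + (c - y $ j) *\<^sub>R ?e)\<bar> \<le> Bc"
    if y: "y \<in> cbox a b" "\<forall>i. i \<notin> insert j S \<longrightarrow> y $ i = x $ i" for y
  proof -
    have "a $ j \<le> b $ j"
      using y(1)[unfolded mem_box_cart, rule_format, of j] by linarith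
    then show "\<bar>f (y + (a $ j - y $ j) *\<^sub>R ?e)\<bar> \<le> Ba" "\<bar>f (y + (b $ j - y $ j) *\<^sub>R ?e)\<bar> \<le> Bb"
      "\<bar>f (y + (c - y $ j) *\<^sub>R ?e)\<bar> \<le> Bc"
      by (intro Ba Bb Bc slice_line y; simp add: c_def)+
  qed
  have convex_line: "convex_on UNIV (\<lambda>s. f (y + s *\<^sub>R ?e))" for y
    using sc by (simp add: separately_convex_def)
  have upper: "f y \<le> max Ba Bb"
    if y: "y \<in> cbox a b" "\<forall>i. i \<notin> insert j S \<longrightarrow> y $ i = x $ i" for y
  proof -
    have "a $ j \<le> y $ j" "y $ j \<le> b $ j"
      using y by (auto simp: mem_box_cart)
    then have "f (y + 0 *\<^sub>R ?e) \<le> max (f (y + (a $ j - y $ j) *\<^sub>R ?e)) (f (y + (b $ j - y $ j) *\<^sub>R ?e))"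
      by (intro convex_on_le_max[OF convex_on_subset[OF convex_line]]) auto
    then show ?thesis
      using bounds[OF y] by simp
  qed
  have "\<bar>f y\<bar> \<le> max Ba Bb + 2 * Bc"
    if y: "y \<in> cbox a b" "\<forall>i. i \<notin> insert j S \<longrightarrow> y $ i = x $ i" for y
  proof -
    define y' where "y' = y + (2 * (c - y $ j)) *\<^sub>R ?e"
    have "y' \<in> cbox a b" "\<forall>i. i \<notin> insert j S \<longrightarrow> y' $ i = x $ i"
      using y y(1)[unfolded mem_box_cart, rule_format, of j]
      unfolding y'_def mem_box_cart axis_line_component by (auto simp: c_def field_simps)
    then have "f y' \<le> max Ba Bb"
      by (rule upper)
    moreover have "f (y + (c - y $ j) *\<^sub>R ?e) \<le> (1 - 1/2) * f y + 1/2 * f y'"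
    proof -
      have "f (y + ((1 - 1/2) *\<^sub>R 0 + (1/2) *\<^sub>R (2 * (c - y $ j))) *\<^sub>R ?e)
          \<le> (1 - 1/2) * f (y + 0 *\<^sub>R ?e) + 1/2 * f y'"
        unfolding y'_def by (rule convex_onD[OF convex_line]) auto
      moreover have "(1 - 1/2) *\<^sub>R 0 + (1/2) *\<^sub>R (2 * (c - y $ j)) = c - y $ j"
        by simp
      ultimately show ?thesis
        by (metis scaleR_zero_left add_0_right)
    qed
    ultimately show ?thesis
      using upper[OF y] bounds(3)[OF y] by (simp add: abs_le_iff)
  qed
  then show ?case by blast
qed

lemma separately_convex_bounded_on_cbox:
  fixes f :: "real^'n \<Rightarrow> real"
  assumes "separately_convex f"
  shows "\<exists>B. \<forall>y\<in>cbox a b. \<bar>f y\<bar> \<le> B"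
  using separately_convex_bounded_on_slice[OF assms, of UNIV a b] by simp

(* On the diagonal, the first branch is G pushed down outside [-m, m]; the other two are H
   pushed down below m and above -m respectively. *)
definition diagonal_patch ::
  "'n::finite \<Rightarrow> 'n \<Rightarrow> real \<Rightarrow> real \<Rightarrow> (real^'n \<Rightarrow> real) \<Rightarrow> (real^'n \<Rightarrow> real) \<Rightarrow> real^'n \<Rightarrow> real"
where
  "diagonal_patch i j c m G H x =
     max (G x + c * saddle (m - x $ i) (m - x $ j) + c * saddle (x $ i + m) (x $ j + m))
       (max (H x + c * saddle (x $ i - m) (x $ j - m)) (H x + c * saddle (- m - x $ i) (- m - x $ j)))"

lemma separately_convex_diagonal_patch:
  assumes "i \<noteq> j" and "0 \<le> c" and "separately_convex G" and "separately_convex H"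
  shows "separately_convex (diagonal_patch i j c m G H)"
proof -
  have "separately_convex (\<lambda>x. saddle (s * x $ i + t) (s * x $ j + t))" for s t
    using \<open>i \<noteq> j\<close> by (rule separately_convex_saddle)
  from this[of "-1" m] this[of 1 m] this[of 1 "-m"] this[of "-1" "-m"]
  show ?thesis
    unfolding diagonal_patch_def using assms
    by (intro separately_convex_max separately_convex_add separately_convex_cmul) (simp_all add: algebra_simps)
qed

lemma diagonal_patch_on_diagonal:
  assumes "0 \<le> c" and "H (\<chi> l. u) = g u" and "\<bar>u\<bar> \<le> m + 1/2 \<Longrightarrow> G (\<chi> l. u) = g u"
    and "G (\<chi> l. u) \<le> g u + c / 4"
  shows "diagonal_patch i j c m G H (\<chi> l. u) = g u"
proof -
  have le_0: "c * saddle a a \<le> 0" for a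
    using \<open>0 \<le> c\<close> saddle_self_le_0 mult_nonneg_nonpos by blast
  have far: "c * saddle a a \<le> - c / 4" if "a \<le> -1/2" for a
    using mult_left_mono[OF saddle_le_neg_quarter[OF that that] \<open>0 \<le> c\<close>] by simp
  have "G (\<chi> l. u) + c * saddle (m - u) (m - u) + c * saddle (u + m) (u + m) \<le> g u"
  proof (cases "\<bar>u\<bar> \<le> m + 1/2")
    case True
    then show ?thesis using assms(3) le_0[of "m - u"] le_0[of "u + m"] by simp
  next
    case False
    then have "m - u \<le> -1/2 \<or> u + m \<le> -1/2" by linarith
    then show ?thesis
      using assms(4) le_0[of "m - u"] le_0[of "u + m"] far[of "m - u"] far[of "u + m"] by linarith
  qed
  moreover have "G (\<chi> l. u) + c * saddle (m - u) (m - u) + c * saddle (u + m) (u + m) = g u"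
    if "\<bar>u\<bar> \<le> m" using that assms(3) by (simp add: saddle_eq_0)
  moreover have "H (\<chi> l. u) + c * saddle (u - m) (u - m) \<le> g u" "H (\<chi> l. u) + c * saddle (- m - u) (- m - u) \<le> g u"
    using assms(2) le_0 by auto
  moreover have "H (\<chi> l. u) + c * saddle (u - m) (u - m) = g u" if "m \<le> u"
    using that assms(2) by (simp add: saddle_eq_0)
  moreover have "H (\<chi> l. u) + c * saddle (- m - u) (- m - u) = g u" if "u \<le> - m"
    using that assms(2) by (simp add: saddle_eq_0)
  ultimately show ?thesis
    unfolding diagonal_patch_def by (simp add: max_def) linarith
qed

lemma diagonal_patch_interior:
  assumes "0 \<le> c" and "\<bar>x $ i\<bar> \<le> m - 1/2" and "\<bar>x $ j\<bar> \<le> m - 1/2" and "H x \<le> G x + c / 4"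
  shows "diagonal_patch i j c m G H x = G x"
proof -
  have "c * saddle (x $ i - m) (x $ j - m) \<le> - c / 4" "c * saddle (- m - x $ i) (- m - x $ j) \<le> - c / 4"
    using assms(2,3) mult_left_mono[OF saddle_le_neg_quarter \<open>0 \<le> c\<close>] by auto
  moreover have "saddle (m - x $ i) (m - x $ j) = 0" "saddle (x $ i + m) (x $ j + m) = 0"
    using assms(2,3) by (auto intro: saddle_eq_0)
  ultimately show ?thesis
    using assms(4) unfolding diagonal_patch_def by (simp add: max_def)
qed

lemma separately_convex_extension_step:
  fixes G H :: "real^'n \<Rightarrow> real" and i j :: 'n
  assumes "i \<noteq> j" and scG: "separately_convex G" and scH: "separately_convex H"
    and G_diag: "\<forall>u\<in>{-R..R}. G (\<chi> l. u) = g u" and H_diag: "\<forall>u\<in>{-(R+1)..R+1}. H (\<chi> l. u) = g u"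
  obtains G' where "separately_convex G'" and "\<forall>u\<in>{-(R+1)..R+1}. G' (\<chi> l. u) = g u"
    and "\<forall>x. norm x \<le> R - 1 \<longrightarrow> G' x = G x"
proof -
  define K :: "(real^'n) set" where "K = cbox (\<chi> l. -(R+1)) (\<chi> l. R+1)"
  obtain BG BH where BG: "\<And>y. y \<in> K \<Longrightarrow> \<bar>G y\<bar> \<le> BG" and BH: "\<And>y. y \<in> K \<Longrightarrow> \<bar>H y\<bar> \<le> BH"
    using separately_convex_bounded_on_cbox[OF scG] separately_convex_bounded_on_cbox[OF scH]
    unfolding K_def by metis
  define c where "c = 4 * (\<bar>BG\<bar> + \<bar>BH\<bar>)"
  have "0 \<le> c" and quarter: "c / 4 = \<bar>BG\<bar> + \<bar>BH\<bar>"
    by (simp_all add: c_def)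
  have G_le_H: "G y \<le> H y + c / 4" and H_le_G: "H y \<le> G y + c / 4" if "y \<in> K" for y
    using BG[OF that] BH[OF that] unfolding quarter by linarith+
  show thesis
  proof
    show "separately_convex (diagonal_patch i j c (R - 1/2) G H)"
      using separately_convex_diagonal_patch[OF \<open>i \<noteq> j\<close> \<open>0 \<le> c\<close> scG scH] .
    show "\<forall>u\<in>{-(R+1)..R+1}. diagonal_patch i j c (R - 1/2) G H (\<chi> l. u) = g u"
    proof
      fix u assume u: "u \<in> {-(R+1)..R+1}"
      then have "(\<chi> l. u) \<in> K" by (simp add: K_def mem_box_cart)
      have H: "H (\<chi> l. u) = g u"
        using H_diag u by blast
      show "diagonal_patch i j c (R - 1/2) G H (\<chi> l. u) = g u"
      proof (rule diagonal_patch_on_diagonal[where H = H and u = u and g = g, OF \<open>0 \<le> c\<close> H])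
        show "G (\<chi> l. u) = g u" if "\<bar>u\<bar> \<le> R - 1/2 + 1/2"
          using G_diag that by (simp add: abs_le_iff)
        show "G (\<chi> l. u) \<le> g u + c / 4"
          using G_le_H[OF \<open>(\<chi> l. u) \<in> K\<close>] H by simp
      qed
    qed
    show "\<forall>x. norm x \<le> R - 1 \<longrightarrow> diagonal_patch i j c (R - 1/2) G H x = G x"
    proof (intro allI impI)
      fix x :: "real^'n" assume x: "norm x \<le> R - 1"
      have comp: "\<bar>x $ l\<bar> \<le> R - 1" for l
        using component_le_norm_cart[of x l] x by linarith
      have "- (R + 1) \<le> x $ l \<and> x $ l \<le> R + 1" for l
        using comp[of l] by linarith
      then have "x \<in> K"
        by (simp add: K_def mem_box_cart)
      then show "diagonal_patch i j c (R - 1/2) G H x = G x"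
        using comp[of i] comp[of j] H_le_G \<open>0 \<le> c\<close> by (intro diagonal_patch_interior) auto
    qed
  qed
qed

lemma separately_convex_glue:
  fixes G :: "nat \<Rightarrow> real^'n \<Rightarrow> real"
  assumes sc: "\<And>k. separately_convex (G k)"
    and stable: "\<And>k x. norm x \<le> real k \<Longrightarrow> G (Suc k) x = G k x"
  shows "separately_convex (\<lambda>x. G (nat \<lceil>norm x\<rceil>) x)"
proof -
  define F where "F x = G (nat \<lceil>norm x\<rceil>) x" for x
  have stable_le: "G n x = G k x" if "k \<le> n" "norm x \<le> real k" for k n x
    using that(1)
  proof (induction n rule: dec_induct)
    case (step n)
    then show ?case using stable[of x n] that(2) by simp
  qed simp
  have F_eq: "F x = G k x" if "norm x \<le> real k" for k x
    unfolding F_def using that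
    by (intro stable_le[symmetric]) (auto simp: real_nat_ceiling_ge nat_le_iff ceiling_le)
  have "convex_on UNIV (\<lambda>p. F (x + p *\<^sub>R axis i 1))" for x i
  proof (rule convex_onI)
    fix t s r :: real
    assume t: "0 < t" "t < 1"
    define k where "k = nat \<lceil>norm x + \<bar>s\<bar> + \<bar>r\<bar>\<rceil>"
    have on_line: "F (x + p *\<^sub>R axis i 1) = G k (x + p *\<^sub>R axis i 1)" if "\<bar>p\<bar> \<le> \<bar>s\<bar> + \<bar>r\<bar>" for p
    proof (rule F_eq)
      have "norm (x + p *\<^sub>R axis i 1) \<le> norm x + \<bar>p\<bar>"
        using norm_triangle_ineq[of x "p *\<^sub>R axis i (1::real)"] by simp
      also have "\<dots> \<le> real k"
        using that real_nat_ceiling_ge[of "norm x + \<bar>s\<bar> + \<bar>r\<bar>"] unfolding k_def by linarith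
      finally show "norm (x + p *\<^sub>R axis i 1) \<le> real k" .
    qed
    have "(1 - t) * \<bar>s\<bar> \<le> \<bar>s\<bar>" "t * \<bar>r\<bar> \<le> \<bar>r\<bar>"
      using t by (simp_all add: mult_left_le_one_le)
    then have "\<bar>(1 - t) * s + t * r\<bar> \<le> \<bar>s\<bar> + \<bar>r\<bar>"
      using t abs_triangle_ineq[of "(1 - t) * s" "t * r"] by (simp add: abs_mult)
    moreover have "G k (x + ((1 - t) *\<^sub>R s + t *\<^sub>R r) *\<^sub>R axis i 1)
        \<le> (1 - t) * G k (x + s *\<^sub>R axis i 1) + t * G k (x + r *\<^sub>R axis i 1)"
      using sc[of k] t unfolding separately_convex_def by (intro convex_onD) auto
    ultimately show "F (x + ((1 - t) *\<^sub>R s + t *\<^sub>R r) *\<^sub>R axis i 1)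
        \<le> (1 - t) * F (x + s *\<^sub>R axis i 1) + t * F (x + r *\<^sub>R axis i 1)"
      using on_line[of s] on_line[of r] on_line[of "(1 - t) * s + t * r"] by simp
  qed simp
  then show ?thesis
    by (simp add: separately_convex_def F_def)
qed

lemma separately_convex_diagonal_extension_sequence:
  fixes i j :: "'n::finite" and g :: "real \<Rightarrow> real"
  assumes "i \<noteq> j"
    and local: "\<And>a b. a \<le> b \<Longrightarrow> \<exists>f :: real^'n \<Rightarrow> real. separately_convex f \<and> (\<forall>u\<in>{a..b}. f (\<chi> l. u) = g u)"
  obtains G :: "nat \<Rightarrow> real^'n \<Rightarrow> real"
  where "\<And>k. separately_convex (G k)" and "\<And>k. \<forall>u\<in>{-(real k + 1)..real k + 1}. G k (\<chi> l. u) = g u"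
    and "\<And>k x. norm x \<le> real k \<Longrightarrow> G (Suc k) x = G k x"
proof -
  let ?P = "\<lambda>k (G :: real^'n \<Rightarrow> real). separately_convex G \<and> (\<forall>u\<in>{-(real k + 1)..real k + 1}. G (\<chi> l. u) = g u)"
  let ?Q = "\<lambda>k (G :: real^'n \<Rightarrow> real) G'. \<forall>x. norm x \<le> real k \<longrightarrow> G' x = G x"
  have "\<exists>G. ?P 0 G"
    using local[of "-1" 1] by simp
  moreover have "\<exists>G'. ?P (Suc k) G' \<and> ?Q k G G'" if G: "?P k G" for k G
  proof -
    have "-(real k + 1 + 1) \<le> real k + 1 + 1"
      by simp
    from local[OF this] obtain H :: "real^'n \<Rightarrow> real" where
      H: "separately_convex H \<and> (\<forall>u\<in>{-(real k + 1 + 1)..real k + 1 + 1}. H (\<chi> l. u) = g u)" ..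
    obtain G' where "separately_convex G'" "\<forall>u\<in>{-(real k + 1 + 1)..real k + 1 + 1}. G' (\<chi> l. u) = g u"
      "\<forall>x. norm x \<le> real k + 1 - 1 \<longrightarrow> G' x = G x"
      by (rule separately_convex_extension_step[OF \<open>i \<noteq> j\<close> conjunct1[OF G] conjunct1[OF H]
            conjunct2[OF G] conjunct2[OF H]])
    then show ?thesis
      by (auto simp: add.commute)
  qed
  ultimately have "\<exists>G. \<forall>k. ?P k (G k) \<and> ?Q k (G k) (G (Suc k))"
    by (rule dependent_nat_choice)
  then obtain G where G: "\<And>k. ?P k (G k) \<and> ?Q k (G k) (G (Suc k))"
    by blast
  show thesis
    using G by (intro that[of G]) simp_all
qed

theorem proposition2p2:
  fixes g :: "real \<Rightarrow> real"
  assumes "CARD('n) \<ge> 2"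
    and "locally_lipschitz g"
    and "\<And>a b. a \<le> b \<Longrightarrow> \<exists>f :: real ^ 'n \<Rightarrow> real. separately_convex f \<and>
                 (\<forall>u\<in>{a..b}. f (\<chi> i. u) = g u)"
  shows "\<exists>f :: real ^ 'n \<Rightarrow> real. separately_convex f \<and> (\<forall>u. f (\<chi> i. u) = g u)"
proof -
  have "\<not> CARD('n) \<le> Suc 0"
    using assms(1) by simp
  then obtain i j :: 'n where "i \<noteq> j"
    by (auto simp: card_le_Suc0_iff_eq)
  obtain G :: "nat \<Rightarrow> real^'n \<Rightarrow> real" where sc: "\<And>k. separately_convex (G k)"
    and diag: "\<And>k. \<forall>u\<in>{-(real k + 1)..real k + 1}. G k (\<chi> l. u) = g u"
    and stable: "\<And>k x. norm x \<le> real k \<Longrightarrow> G (Suc k) x = G k x"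
    using separately_convex_diagonal_extension_sequence[OF \<open>i \<noteq> j\<close> assms(3)] by blast
  show ?thesis
  proof (intro exI conjI allI)
    show "separately_convex (\<lambda>x. G (nat \<lceil>norm x\<rceil>) x)"
      using sc stable by (rule separately_convex_glue)
    fix u
    have "\<bar>u\<bar> \<le> norm (\<chi> l::'n. u)"
      using component_le_norm_cart[of "\<chi> l::'n. u" i] by simp
    then have "\<bar>u\<bar> \<le> real (nat \<lceil>norm (\<chi> l::'n. u)\<rceil>)"
      using real_nat_ceiling_ge order_trans by blast
    then show "G (nat \<lceil>norm (\<chi> l::'n. u)\<rceil>) (\<chi> l. u) = g u"
      using diag by (simp add: abs_le_iff)
  qed
qed

end
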